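(* Let $X\sim p^{\mathbb{Z}^d}$, $Y\sim q^{\mathbb{Z}^d}$ be i.i.d. processes over finite alphabets and let $\phi:X\to Y$ be a finitary homomorphism with $\mathbf{E}[R_\phi^{d/2}]<\infty$. Then there is a sequence $\delta_N\searrow0$ such that \[\mathbf{E}[|\mathcal{J}^c_{N,\lfloor\delta_N N\rfloor}|]=o(N^{d/2})\quad(N\to\infty).\]
   Context: A homomorphism $\phi:X\to Y$ is a measurable shift-commuting map $A^{\mathbb{Z}^d}\to B^{\mathbb{Z}^d}$ pushing $\mu=p^{\mathbb{Z}^d}$ to $\nu=q^{\mathbb{Z}^d}$. Its coding radius is $R_\phi(x)=\min\{n\in\mathbb{N}\cup\{\infty\}:\text{for }\mu\text{-a.e. }a,\ a|_{[-n,n]^d}=x|_{[-n,n]^d}\Rightarrow\phi(a)_0=\phi(x)_0\}$; finitary means $R_\phi<\infty$ a.s. Let $*\notin B$; for $n\in\mathbb{N}$ put $\phi^n_0(x)=\phi(x)_0$ if $R_\phi(x)\le n$ and $*$ otherwise (a.e. a function of $x|_{[-n,n]^d}$). For $\mathbb{T}_N^d=\mathbb{Z}^d/(N\mathbb{Z})^d$ and $N\ge2n+1$, define $\hat\phi^n:A^{\mathbb{T}_N^d}\to(B\cup\{*\})^{\mathbb{T}_N^d}$ by letting $\hat\phi^n(\hat x)_u$ be $\phi^n_0$ evaluated at the $N$-periodic extension of $T_{-u}\hat x$, where $(T_{-u}\hat x)_v=\hat x_{v+u}$. With $\hat X\sim p^{\mathbb{T}_N^d}$, $\mathcal{J}^c_{N,n}=\{u\in\mathbb{T}_N^d:\hat\phi^n(\hat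 X)_u=*\}$ (a random set). *)

theory Defs
  imports "HOL-Probability.Probability" "HOL-Library.Landau_Symbols"
begin

text \<open>Lattice points of Z^d are functions 'n => int for a finite type 'n, d = CARD('n).\<close>

definition origin :: "'n::finite \<Rightarrow> int" where
  "origin = (\<lambda>_. 0)"

definition box :: "nat \<Rightarrow> ('n::finite \<Rightarrow> int) set" where
  "box n = {v. \<forall>i. \<bar>v i\<bar> \<le> int n}"

definition torus :: "nat \<Rightarrow> ('n::finite \<Rightarrow> int) set" where
  "torus N = {u. \<forall>i. 0 \<le> u i \<and> u i < int N}"

definition iid :: "'a pmf \<Rightarrow> (('n::finite \<Rightarrow> int) \<Rightarrow> 'a) measure" where
  "iid p = PiM UNIV (\<lambda>_. measure_pmf p)"

definition shift :: "('n::finite \<Rightarrow> int) \<Rightarrow> (('n \<Rightarrow> int) \<Rightarrow> 'a) \<Rightarrow> (('n \<Rightarrow> int) \<Rightarrow> 'a)" where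
  "shift u x = (\<lambda>v. x (\<lambda>i. v i - u i))"

definition homomorphism ::
  "'a pmf \<Rightarrow> 'b pmf \<Rightarrow> ((('n::finite \<Rightarrow> int) \<Rightarrow> 'a) \<Rightarrow> (('n \<Rightarrow> int) \<Rightarrow> 'b)) \<Rightarrow> bool" where
  "homomorphism p q \<phi> \<longleftrightarrow>
     \<phi> \<in> iid p \<rightarrow>\<^sub>M iid q \<and>
     distr (iid p) (iid q) \<phi> = iid q \<and>
     (\<forall>u. AE x in iid p. \<phi> (shift u x) = shift u (\<phi> x))"

definition coding_radius ::
  "'a pmf \<Rightarrow> ((('n::finite \<Rightarrow> int) \<Rightarrow> 'a) \<Rightarrow> (('n \<Rightarrow> int) \<Rightarrow> 'b)) \<Rightarrow> (('n \<Rightarrow> int) \<Rightarrow> 'a) \<Rightarrow> enat" where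
  "coding_radius p \<phi> x =
     (let ok = (\<lambda>n::nat. AE a in iid p. (\<forall>v\<in>box n. a v = x v) \<longrightarrow> \<phi> a origin = \<phi> x origin)
      in if \<exists>n. ok n then enat (LEAST n. ok n) else \<infinity>)"

definition finitary ::
  "'a pmf \<Rightarrow> ((('n::finite \<Rightarrow> int) \<Rightarrow> 'a) \<Rightarrow> (('n \<Rightarrow> int) \<Rightarrow> 'b)) \<Rightarrow> bool" where
  "finitary p \<phi> \<longleftrightarrow> (AE x in iid p. coding_radius p \<phi> x < \<infinity>)"

text \<open>phi^n_0 : None plays the role of the extra symbol *.\<close>
definition trunc_code ::
  "'a pmf \<Rightarrow> ((('n::finite \<Rightarrow> int) \<Rightarrow> 'a) \<Rightarrow> (('n \<Rightarrow> int) \<Rightarrow> 'b)) \<Rightarrow> nat \<Rightarrow> (('n \<Rightarrow> int) \<Rightarrow> 'a) \<Rightarrow> 'b option" where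
  "trunc_code p \<phi> n x = (if coding_radius p \<phi> x \<le> enat n then Some (\<phi> x origin) else None)"

definition local_version ::
  "'a pmf \<Rightarrow> ((('n::finite \<Rightarrow> int) \<Rightarrow> 'a) \<Rightarrow> (('n \<Rightarrow> int) \<Rightarrow> 'b)) \<Rightarrow> nat \<Rightarrow> ((('n \<Rightarrow> int) \<Rightarrow> 'a) \<Rightarrow> 'b option) \<Rightarrow> bool" where
  "local_version p \<phi> n g \<longleftrightarrow>
     (\<forall>x y. (\<forall>v\<in>box n. x v = y v) \<longrightarrow> g x = g y) \<and>
     (AE x in iid p. g x = trunc_code p \<phi> n x)"

text \<open>The random set J^c_(N,n) on the torus: u such that hat-phi^n(hat x)_u = *.\<close>
definition Jc :: "((('n::finite \<Rightarrow> int) \<Rightarrow> 'a) \<Rightarrow> 'b option) \<Rightarrow> nat \<Rightarrow> (('n \<Rightarrow> int) \<Rightarrow> 'a) \<Rightarrow> ('n \<Rightarrow> int) set" where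
  "Jc g N xh = {u \<in> torus N. g (\<lambda>v. xh (\<lambda>i. (v i + u i) mod int N)) = None}"

definition torus_iid :: "'a pmf \<Rightarrow> nat \<Rightarrow> (('n::finite \<Rightarrow> int) \<Rightarrow> 'a) pmf" where
  "torus_iid p N = Pi_pmf (torus N) undefined (\<lambda>_. p)"

end

theory Submission
  imports Defs "HOL-Real_Asymp.Real_Asymp"
begin

text \<open>
  Once the window [-n,n]^d fits into the torus, the window of a uniform i.i.d. torus configuration
  around any site has the law of the i.i.d. field on [-n,n]^d, so
  E |J^c_{N,n}| = N^d P(R > n) for the coding radius R.
  The moment condition gives m^{d/2} P(R > m) <= H m := E[R^{d/2}; R > m], with H decreasing to 0.
  Taking \<delta>_N >= max (H(floor (sqrt N)))^{1/d} (1/sqrt N), decreasing to 0, yields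
  N^{d/2} P(R > \<delta>_N N) <= 2^{d/2} sqrt (H(floor (sqrt N))) \<longrightarrow> 0.
\<close>

section \<open>Tails of a finite moment\<close>

lemma integral_mult_indicator_tendsto_0:
  fixes F :: "'x \<Rightarrow> real"
  assumes "integrable M F" and S_sets: "\<And>m. S m \<in> sets M"
    and "AE x in M. \<forall>\<^sub>F m in sequentially. x \<notin> S m"
  shows "(\<lambda>m. \<integral>x. F x * indicator (S m) x \<partial>M) \<longlonglongrightarrow> 0"
proof -
  have "(\<lambda>m. \<integral>x. F x * indicator (S m) x \<partial>M) \<longlonglongrightarrow> (\<integral>x. 0 \<partial>M)"
  proof (rule integral_dominated_convergence[where w="\<lambda>x. \<bar>F x\<bar>"])
    show "AE x in M. (\<lambda>m. F x * indicator (S m) x) \<longlonglongrightarrow> 0"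
      using assms(3)
    proof eventually_elim
      case (elim x)
      then have "\<forall>\<^sub>F m in sequentially. F x * indicator (S m) x = 0"
        by (rule eventually_mono) simp
      then show ?case
        by (rule tendsto_eventually)
    qed
    show "(\<lambda>x. F x * indicator (S m) x) \<in> borel_measurable M" for m
      using integrable_real_mult_indicator[OF S_sets assms(1)] by auto
  qed (use assms(1) in \<open>auto simp: indicator_def\<close>)
  then show ?thesis
    by simp
qed

lemma mult_measure_le_integral_indicator:
  fixes F :: "'x \<Rightarrow> real"
  assumes "finite_measure M" and "integrable M F" and "S \<in> sets M"
    and "AE x in M. x \<in> S \<longrightarrow> c \<le> F x"
  shows "c * measure M S \<le> (\<integral>x. F x * indicator S x \<partial>M)"
proof -
  interpret finite_measure M by fact
  have "c * measure M S = (\<integral>x. c * indicator S x \<partial>M)"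
    using assms(3) by simp
  also have "\<dots> \<le> (\<integral>x. F x * indicator S x \<partial>M)"
  proof (rule integral_mono_AE)
    show "integrable M (\<lambda>x. c * indicator S x)"
      using assms(3) by (intro integrable_mult_right) (auto simp: emeasure_eq_measure)
    show "integrable M (\<lambda>x. F x * indicator S x)"
      by (rule integrable_real_mult_indicator[OF assms(3,2)])
    show "AE x in M. c * indicator S x \<le> F x * indicator S x"
      using assms(4) by eventually_elim (auto simp: indicator_def)
  qed
  finally show ?thesis .
qed

lemma tail_moment_bound:
  fixes R :: "'x \<Rightarrow> enat" and a :: real
  assumes "finite_measure M" and R_meas: "R \<in> M \<rightarrow>\<^sub>M count_space UNIV" and "0 \<le> a"
    and moment: "(\<integral>\<^sup>+ x. (case R x of enat r \<Rightarrow> ennreal (real r powr a) | \<infinity> \<Rightarrow> \<infinity>) \<partial>M) < \<infinity>"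
  shows "\<exists>H::nat \<Rightarrow> real. (\<forall>m. 0 \<le> H m) \<and> decseq H \<and> H \<longlonglongrightarrow> 0 \<and>
           (\<forall>m. real m powr a * measure M {x \<in> space M. enat m < R x} \<le> H m)"
proof -
  define F where "F x = (case R x of enat r \<Rightarrow> real r powr a | \<infinity> \<Rightarrow> 0)" for x
  define S where "S m = {x \<in> space M. enat m < R x}" for m
  define H where "H m = (\<integral>x. F x * indicator (S m) x \<partial>M)" for m
  have F_nonneg: "0 \<le> F x" for x
    by (auto simp: F_def split: enat.splits)
  have meas_R: "(\<lambda>x. f (R x)) \<in> borel_measurable M" for f :: "enat \<Rightarrow> 'c::topological_space"
    using R_meas by (rule measurable_compose) (simp add: measurable_count_space_eq1)
  have "AE x in M. (case R x of enat r \<Rightarrow> ennreal (real r powr a) | \<infinity> \<Rightarrow> \<infinity>) \<noteq> \<infinity>"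
    using moment by (intro nn_integral_PInf_AE meas_R) auto
  then have R_finite: "AE x in M. R x \<noteq> \<infinity>"
    by (auto elim!: AE_mp split: enat.splits)
  have "(\<integral>\<^sup>+ x. ennreal (F x) \<partial>M) \<le> (\<integral>\<^sup>+ x. (case R x of enat r \<Rightarrow> ennreal (real r powr a) | \<infinity> \<Rightarrow> \<infinity>) \<partial>M)"
    by (intro nn_integral_mono) (auto simp: F_def split: enat.splits)
  moreover have "F \<in> borel_measurable M"
    unfolding F_def by (rule meas_R)
  ultimately have "integrable M F"
    using moment F_nonneg by (intro integrableI_nonneg) auto
  have S_sets: "S m \<in> sets M" for m
    using measurable_sets[OF R_meas, of "{e. enat m < e}"] by (simp add: S_def vimage_def Int_def conj_commute)
  have "0 \<le> H m" for m
    unfolding H_def by (intro integral_nonneg_AE) (auto simp: F_nonneg)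
  moreover have "decseq H"
    unfolding decseq_def H_def
  proof (intro allI impI integral_mono integrable_real_mult_indicator S_sets \<open>integrable M F\<close>)
    fix m m' :: nat and x assume "m \<le> m'"
    then have "x \<in> S m' \<Longrightarrow> x \<in> S m"
      by (auto simp: S_def intro: le_less_trans[of "enat m" "enat m'"])
    then show "F x * indicator (S m') x \<le> F x * indicator (S m) x"
      using F_nonneg[of x] by (auto simp: indicator_def)
  qed
  moreover have "H \<longlonglongrightarrow> 0"
    unfolding H_def using \<open>integrable M F\<close> S_sets
  proof (rule integral_mult_indicator_tendsto_0)
    show "AE x in M. \<forall>\<^sub>F m in sequentially. x \<notin> S m"
      using R_finite by eventually_elim (auto simp: S_def eventually_sequentially not_less)
  qed
  moreover have "real m powr a * measure M (S m) \<le> H m" for m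
    unfolding H_def using assms(1) \<open>integrable M F\<close> S_sets
  proof (rule mult_measure_le_integral_indicator)
    show "AE x in M. x \<in> S m \<longrightarrow> real m powr a \<le> F x"
      using R_finite by eventually_elim (auto simp: S_def F_def powr_mono2 \<open>0 \<le> a\<close>)
  qed
  ultimately show ?thesis
    unfolding S_def by blast
qed

section \<open>Choice of the scale\<close>

lemma powr_mult_le_rescaled:
  fixes N n :: nat and a \<delta> t h :: real
  assumes "0 \<le> a" "0 < \<delta>" "1 \<le> n" "n = nat \<lfloor>\<delta> * real N\<rfloor>" "0 \<le> t"
    and "real n powr a * t \<le> h"
  shows "real N powr a * t \<le> (2 / \<delta>) powr a * h"
proof -
  have "\<delta> * real N < real n + 1"
    using assms(3,4) by linarith
  then have "real N \<le> 2 * real n / \<delta>"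
    using assms(2,3) by (simp add: field_simps)
  then have "real N powr a * t \<le> (2 * real n / \<delta>) powr a * t"
    using assms by (intro mult_right_mono powr_mono2) auto
  also have "\<dots> = (2 / \<delta>) powr a * (real n powr a * t)"
    using assms(2) by (simp add: powr_mult powr_divide)
  also have "\<dots> \<le> (2 / \<delta>) powr a * h"
    using assms(6) by (intro mult_left_mono) auto
  finally show ?thesis .
qed

lemma divide_powr_le_sqrt:
  fixes a d h :: real
  assumes "0 < a" "0 \<le> h" "h powr (1 / (2 * a)) \<le> d"
  shows "h / d powr a \<le> sqrt h"
proof (cases "h = 0")
  case False
  have "sqrt h = (h powr (1 / (2 * a))) powr a"
    using assms(1,2) by (simp add: powr_powr powr_half_sqrt[symmetric])
  also have "\<dots> \<le> d powr a"
    using assms by (intro powr_mono2) auto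
  finally have "sqrt h \<le> d powr a" .
  have "0 < sqrt h" using False assms(2) by simp
  have "h = sqrt h * sqrt h"
    using assms(2) by simp
  also have "\<dots> \<le> sqrt h * d powr a"
    using \<open>sqrt h \<le> d powr a\<close> assms(2) by (intro mult_left_mono) auto
  finally have "h \<le> sqrt h * d powr a" .
  moreover have "0 < d powr a"
    using \<open>0 < sqrt h\<close> \<open>sqrt h \<le> d powr a\<close> by linarith
  ultimately show ?thesis
    by (simp add: pos_divide_le_eq mult.commute)
qed simp

lemma tail_rescaling:
  fixes H T :: "nat \<Rightarrow> real" and a :: real
  assumes a: "0 < a" and H_nonneg: "\<And>m. 0 \<le> H m" and "decseq H" and "H \<longlonglongrightarrow> 0"
    and T_nonneg: "\<And>m. 0 \<le> T m" and T_le: "\<And>m. real m powr a * T m \<le> H m"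
  shows "\<exists>\<delta>::nat \<Rightarrow> real. (\<forall>N. 0 < \<delta> N) \<and> decseq \<delta> \<and> \<delta> \<longlonglongrightarrow> 0 \<and>
     (\<lambda>N. real N powr a * T (nat \<lfloor>\<delta> N * real N\<rfloor>)) \<longlonglongrightarrow> 0"
proof -
  define k where "k N = nat \<lfloor>sqrt (real N)\<rfloor>" for N :: nat
  define c where "c N = H (k N) powr (1 / (2 * a))" for N
  define l where "l N = 1 / sqrt (real (max 1 N))" for N :: nat
  \<comment> \<open>c N makes H (k N) / \<delta> N powr a at most sqrt (H (k N)); l N forces \<delta> N * N \<ge> sqrt N \<ge> k N.\<close>
  define \<delta> where "\<delta> N = max (c N) (l N)" for N
  have k_mono: "mono k"
    unfolding k_def by (intro monoI nat_mono floor_mono) simp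
  have k_lim: "filterlim k at_top sequentially"
    unfolding k_def by (intro filterlim_compose[OF filterlim_nat_sequentially]
        filterlim_compose[OF filterlim_floor_sequentially]) real_asymp
  have Hk_lim: "(\<lambda>N. H (k N)) \<longlonglongrightarrow> 0"
    using \<open>H \<longlonglongrightarrow> 0\<close> k_lim by (rule filterlim_compose)
  have \<delta>_pos: "0 < \<delta> N" for N
    by (simp add: \<delta>_def l_def max.strict_coboundedI2)
  have "decseq c"
    unfolding c_def using a H_nonneg \<open>decseq H\<close> k_mono
    by (intro decseq_SucI powr_mono2) (auto simp: decseq_def mono_def)
  moreover have "decseq l"
    unfolding l_def by (intro decseq_SucI) (auto simp: divide_simps)
  ultimately have "decseq \<delta>"
    unfolding \<delta>_def decseq_def by (intro allI impI max.mono) auto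
  have "c \<longlonglongrightarrow> 0"
    unfolding c_def using a H_nonneg by (intro tendsto_zero_powrI[OF Hk_lim tendsto_const]) auto
  moreover have "l \<longlonglongrightarrow> 0"
    unfolding l_def by real_asymp
  ultimately have "\<delta> \<longlonglongrightarrow> 0"
    unfolding \<delta>_def using tendsto_max by fastforce
  have bound: "\<forall>\<^sub>F N in sequentially. real N powr a * T (nat \<lfloor>\<delta> N * real N\<rfloor>) \<le> 2 powr a * sqrt (H (k N))"
    using eventually_ge_at_top[of 1] k_lim[unfolded filterlim_at_top, rule_format, of 1]
  proof eventually_elim
    case (elim N)
    define n where "n = nat \<lfloor>\<delta> N * real N\<rfloor>"
    have "sqrt (real N) = l N * real N"
      using elim(1) by (simp add: l_def max_def field_simps real_div_sqrt)
    also have "\<dots> \<le> \<delta> N * real N"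
      by (intro mult_right_mono) (auto simp: \<delta>_def)
    finally have "k N \<le> n"
      unfolding k_def n_def by (intro nat_mono floor_mono)
    have "real N powr a * T n \<le> (2 / \<delta> N) powr a * H n"
      using a \<delta>_pos elim(2) \<open>k N \<le> n\<close> T_nonneg T_le
      by (intro powr_mult_le_rescaled[OF _ _ _ n_def]) auto
    also have "\<dots> \<le> (2 / \<delta> N) powr a * H (k N)"
      using \<open>decseq H\<close> \<open>k N \<le> n\<close> by (intro mult_left_mono) (auto simp: decseq_def)
    also have "\<dots> = 2 powr a * (H (k N) / \<delta> N powr a)"
      using \<delta>_pos[of N] by (simp add: powr_divide)
    also have "\<dots> \<le> 2 powr a * sqrt (H (k N))"
      using a H_nonneg by (intro mult_left_mono divide_powr_le_sqrt) (auto simp: \<delta>_def c_def)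
    finally show ?case by (simp add: n_def)
  qed
  have nonneg: "\<forall>\<^sub>F N in sequentially. 0 \<le> real N powr a * T (nat \<lfloor>\<delta> N * real N\<rfloor>)"
    by (intro always_eventually allI mult_nonneg_nonneg T_nonneg) simp
  have "(\<lambda>N. 2 powr a * sqrt (H (k N))) \<longlonglongrightarrow> 0"
    using tendsto_mult_right_zero[of "\<lambda>N. sqrt (H (k N))"] tendsto_real_sqrt[OF Hk_lim] by simp
  then have "(\<lambda>N. real N powr a * T (nat \<lfloor>\<delta> N * real N\<rfloor>)) \<longlonglongrightarrow> 0"
    by (rule tendsto_sandwich[OF nonneg bound tendsto_const])
  then show ?thesis
    using \<delta>_pos \<open>decseq \<delta>\<close> \<open>\<delta> \<longlonglongrightarrow> 0\<close> by (intro exI[of _ \<delta>]) simp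
qed

lemma eventually_window_fits:
  fixes \<delta> :: "nat \<Rightarrow> real"
  assumes "\<delta> \<longlonglongrightarrow> 0"
  shows "\<forall>\<^sub>F N in sequentially. 2 * nat \<lfloor>\<delta> N * real N\<rfloor> + 1 \<le> N"
proof -
  have "\<forall>\<^sub>F N in sequentially. \<delta> N < 1 / 4"
    using order_tendstoD(2)[OF assms, of "1 / 4"] by simp
  with eventually_ge_at_top[of 2] show ?thesis
  proof eventually_elim
    case (elim N)
    have "\<delta> N * real N \<le> real N / 4"
      using elim(2) mult_right_mono[of "\<delta> N" "1 / 4" "real N"] by simp
    then have "real_of_int \<lfloor>\<delta> N * real N\<rfloor> \<le> real N / 4"
      by linarith
    then show ?case
      using elim(1) by (cases "\<lfloor>\<delta> N * real N\<rfloor> \<ge> 0") linarith+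
  qed
qed

definition periodic_shift :: "nat \<Rightarrow> ('n::finite \<Rightarrow> int) \<Rightarrow> (('n \<Rightarrow> int) \<Rightarrow> 'a) \<Rightarrow> (('n \<Rightarrow> int) \<Rightarrow> 'a)" where
  "periodic_shift N u xh = (\<lambda>v. xh (\<lambda>i. (v i + u i) mod int N))"

definition box_local :: "nat \<Rightarrow> ((('n::finite \<Rightarrow> int) \<Rightarrow> 'a) \<Rightarrow> 'c) \<Rightarrow> bool" where
  "box_local n h \<longleftrightarrow> (\<forall>x y. (\<forall>v\<in>box n. x v = y v) \<longrightarrow> h x = h y)"

lemma box_eq_PiE: "box n = (UNIV::'n::finite set) \<rightarrow>\<^sub>E {-int n..int n}"
  by (auto simp: box_def abs_le_iff PiE_iff minus_le_iff)

lemma torus_eq_PiE: "torus N = (UNIV::'n::finite set) \<rightarrow>\<^sub>E {0..<int N}"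
  by (auto simp: torus_def PiE_iff)

lemma finite_box [simp]: "finite (box n :: ('n::finite \<Rightarrow> int) set)"
  by (simp add: box_eq_PiE finite_PiE)

lemma finite_torus [simp]: "finite (torus N :: ('n::finite \<Rightarrow> int) set)"
  by (simp add: torus_eq_PiE finite_PiE)

lemma card_torus: "card (torus N :: ('n::finite \<Rightarrow> int) set) = N ^ CARD('n)"
  by (simp add: torus_eq_PiE card_PiE)

lemma box_mono: "n \<le> m \<Longrightarrow> box n \<subseteq> box m"
  unfolding box_def by (auto intro: order_trans[of _ "int n" "int m"])

lemma inj_on_torus_translate:
  assumes "2 * n + 1 \<le> N"
  shows "inj_on (\<lambda>v i. (v i + u i) mod int N) (box n :: ('n::finite \<Rightarrow> int) set)"
proof (intro inj_onI ext)
  fix v w :: "'n \<Rightarrow> int" and i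
  assume "v \<in> box n" "w \<in> box n" and "(\<lambda>i. (v i + u i) mod int N) = (\<lambda>i. (w i + u i) mod int N)"
  then have "(v i + u i) mod int N = (w i + u i) mod int N" and "\<bar>v i\<bar> \<le> int n" "\<bar>w i\<bar> \<le> int n"
    by (auto simp: box_def fun_eq_iff)
  moreover have "\<bar>v i - w i\<bar> \<le> \<bar>v i\<bar> + \<bar>w i\<bar>"
    by (rule abs_triangle_ineq4)
  ultimately have "(v i + u i) mod int N = (w i + u i) mod int N" and "\<bar>v i - w i\<bar> < int N"
    using assms by linarith+
  moreover from this(1) have "int N dvd v i - w i"
    by (metis mod_eq_dvd_iff add_diff_cancel_right)
  ultimately show "v i = w i"
    using dvd_imp_le_int[of "v i - w i" "int N"] by fastforce
qed

section \<open>Local events on the lattice and on the torus\<close>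

lemma product_prob_space_pmf: "product_prob_space (\<lambda>_::'i. measure_pmf p)"
  unfolding product_prob_space_def product_prob_space_axioms_def product_sigma_finite_def
  by (auto intro: prob_space_measure_pmf prob_space_imp_sigma_finite)

lemma prob_space_iid: "prob_space (iid p)"
proof -
  interpret product_prob_space "\<lambda>_::'i. measure_pmf p" UNIV
    by (rule product_prob_space_pmf)
  show ?thesis
    unfolding iid_def by unfold_locales
qed

lemma space_iid [simp]: "space (iid p) = UNIV"
  by (simp add: iid_def space_PiM)

lemma iid_cylinder:
  fixes p :: "'a pmf" and z :: "('n::finite \<Rightarrow> int) \<Rightarrow> 'a"
  assumes "finite J"
  shows "{x. \<forall>v\<in>J. x v = z v} \<in> sets (iid p)"
    and "measure (iid p) {x. \<forall>v\<in>J. x v = z v} = (\<Prod>v\<in>J. pmf p (z v))"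
proof -
  interpret product_prob_space "\<lambda>_::('n \<Rightarrow> int). measure_pmf p" UNIV
    by (rule product_prob_space_pmf)
  have cyl: "{x. \<forall>v\<in>J. x v = z v} = prod_emb UNIV (\<lambda>_. measure_pmf p) J (PiE J (\<lambda>v. {z v}))"
    by (auto simp: prod_emb_def PiE_iff)
  show "{x. \<forall>v\<in>J. x v = z v} \<in> sets (iid p)"
    unfolding cyl iid_def using assms by (intro measurable_prod_emb sets_PiM_I_finite) auto
  have "emeasure (iid p) {x. \<forall>v\<in>J. x v = z v} = (\<Prod>v\<in>J. emeasure (measure_pmf p) {z v})"
    unfolding cyl iid_def using assms by (intro emeasure_PiM_emb) auto
  then show "measure (iid p) {x. \<forall>v\<in>J. x v = z v} = (\<Prod>v\<in>J. pmf p (z v))"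
    by (simp add: measure_def emeasure_pmf_single prod_ennreal prod_nonneg)
qed

lemma box_local_cylinder_decomp:
  assumes "box_local n h"
  shows "{x. h x} = (\<Union>z\<in>{z \<in> box n \<rightarrow>\<^sub>E UNIV. h z}. {x. \<forall>v\<in>box n. x v = z v})"
proof safe
  fix x assume "h x"
  then show "x \<in> (\<Union>z\<in>{z \<in> box n \<rightarrow>\<^sub>E UNIV. h z}. {x. \<forall>v\<in>box n. x v = z v})"
    using assms[unfolded box_local_def, rule_format, of "restrict x (box n)" x]
    by (intro UN_I[of "restrict x (box n)"]) auto
next
  fix x z assume "z \<in> box n \<rightarrow>\<^sub>E UNIV" "h z" "\<forall>v\<in>box n. x v = z v"
  then show "h x"
    using assms by (auto simp: box_local_def)
qed

lemma measure_iid_box_local: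
  fixes p :: "'a::finite pmf" and h :: "(('n::finite \<Rightarrow> int) \<Rightarrow> 'a) \<Rightarrow> bool"
  assumes "box_local n h"
  shows "{x. h x} \<in> sets (iid p)"
    and "measure (iid p) {x. h x} = (\<Sum>z | z \<in> box n \<rightarrow>\<^sub>E UNIV \<and> h z. \<Prod>v\<in>box n. pmf p (z v))"
proof -
  interpret prob_space "iid p :: (('n \<Rightarrow> int) \<Rightarrow> 'a) measure"
    by (rule prob_space_iid)
  define S where "S = {z \<in> box n \<rightarrow>\<^sub>E (UNIV::'a set). h z}"
  define C where "C z = {x. \<forall>v\<in>box n. x v = z v}" for z :: "('n \<Rightarrow> int) \<Rightarrow> 'a"
  have "finite S"
    unfolding S_def by (rule finite_subset[of _ "box n \<rightarrow>\<^sub>E UNIV"]) (auto intro!: finite_PiE)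
  have decomp: "{x. h x} = (\<Union>z\<in>S. C z)"
    unfolding S_def C_def by (rule box_local_cylinder_decomp[OF assms])
  have C_sets: "C z \<in> sets (iid p)" for z
    unfolding C_def by (rule iid_cylinder(1)) simp
  show "{x. h x} \<in> sets (iid p)"
    unfolding decomp using \<open>finite S\<close> C_sets by auto
  have "disjoint_family_on C S"
    unfolding disjoint_family_on_def
  proof (intro ballI impI)
    fix z w assume "z \<in> S" "w \<in> S" "z \<noteq> w"
    then obtain v where "v \<in> box n" "z v \<noteq> w v"
      by (auto simp: S_def PiE_iff extensional_def fun_eq_iff) metis
    then show "C z \<inter> C w = {}"
      by (auto simp: C_def)
  qed
  then have "measure (iid p) {x. h x} = (\<Sum>z\<in>S. measure (iid p) (C z))"
    unfolding decomp using \<open>finite S\<close> C_sets by (intro finite_measure_finite_Union) auto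
  also have "\<dots> = (\<Sum>z\<in>S. \<Prod>v\<in>box n. pmf p (z v))"
    unfolding C_def by (intro sum.cong refl iid_cylinder(2)) simp
  finally show "measure (iid p) {x. h x} = (\<Sum>z | z \<in> box n \<rightarrow>\<^sub>E UNIV \<and> h z. \<Prod>v\<in>box n. pmf p (z v))"
    by (simp add: S_def)
qed

lemma measure_Pi_pmf_box:
  fixes p :: "'a::finite pmf" and h :: "(('n::finite \<Rightarrow> int) \<Rightarrow> 'a) \<Rightarrow> bool"
  shows "measure (Pi_pmf (box n) undefined (\<lambda>_. p)) {z. h z}
           = (\<Sum>z | z \<in> box n \<rightarrow>\<^sub>E UNIV \<and> h z. \<Prod>v\<in>box n. pmf p (z v))"
proof -
  define S where "S = {z \<in> box n \<rightarrow>\<^sub>E (UNIV::'a set). h z}"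
  have "finite S"
    unfolding S_def by (rule finite_subset[of _ "box n \<rightarrow>\<^sub>E UNIV"]) (auto intro!: finite_PiE)
  have "{z. h z} \<inter> set_pmf (Pi_pmf (box n) undefined (\<lambda>_. p)) = S \<inter> set_pmf (Pi_pmf (box n) undefined (\<lambda>_. p))"
    using set_Pi_pmf_subset[of "box n" undefined "\<lambda>_. p"] by (auto simp: S_def PiE_iff extensional_def)
  then have "measure (Pi_pmf (box n) undefined (\<lambda>_. p)) {z. h z} = measure (Pi_pmf (box n) undefined (\<lambda>_. p)) S"
    by (metis measure_Int_set_pmf)
  also have "\<dots> = (\<Sum>z\<in>S. pmf (Pi_pmf (box n) undefined (\<lambda>_. p)) z)"
    using \<open>finite S\<close> by (rule measure_measure_pmf_finite)
  also have "\<dots> = (\<Sum>z\<in>S. \<Prod>v\<in>box n. pmf p (z v))"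
    by (intro sum.cong refl) (auto simp: pmf_Pi S_def PiE_iff extensional_def)
  finally show ?thesis
    by (simp add: S_def)
qed

lemma measure_iid_eq_Pi_pmf_box:
  fixes p :: "'a::finite pmf" and h :: "(('n::finite \<Rightarrow> int) \<Rightarrow> 'a) \<Rightarrow> bool"
  assumes "box_local n h"
  shows "measure (iid p) {x. h x} = measure (Pi_pmf (box n) undefined (\<lambda>_. p)) {z. h z}"
  by (simp add: measure_iid_box_local(2)[OF assms] measure_Pi_pmf_box)

lemma map_pmf_restrict_periodic_shift:
  fixes p :: "'a pmf" and u :: "'n::finite \<Rightarrow> int"
  assumes "2 * n + 1 \<le> N" and "u \<in> torus N"
  shows "map_pmf (\<lambda>xh. restrict (periodic_shift N u xh) (box n)) (torus_iid p N)
           = Pi_pmf (box n) undefined (\<lambda>_. p)"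
proof -
  define \<sigma> :: "('n \<Rightarrow> int) \<Rightarrow> ('n \<Rightarrow> int)" where "\<sigma> = (\<lambda>v i. (v i + u i) mod int N)"
  define B where "B = \<sigma> ` box n"
  \<comment> \<open>Pi_pmf_bij_betw needs a map sending the complement of box n outside B.\<close>
  define \<sigma>' where "\<sigma>' v = (if v \<in> box n then \<sigma> v else (\<lambda>_. -1))" for v
  have "B \<subseteq> torus N"
    using assms(1) by (auto simp: B_def \<sigma>_def torus_def)
  have "bij_betw \<sigma> (box n) B"
    unfolding B_def \<sigma>_def by (rule inj_on_imp_bij_betw[OF inj_on_torus_translate[OF assms(1)]])
  then have "bij_betw \<sigma>' (box n) B"
    by (rule bij_betw_cong[THEN iffD1, rotated]) (simp add: \<sigma>'_def)
  moreover have outside: "\<sigma>' v \<notin> B" if "v \<notin> box n" for v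
    using that \<open>B \<subseteq> torus N\<close> by (auto simp: \<sigma>'_def torus_def)
  ultimately have "Pi_pmf (box n) undefined (\<lambda>_. p) = map_pmf (\<lambda>f. f \<circ> \<sigma>') (Pi_pmf B undefined (\<lambda>_. p))"
    by (intro Pi_pmf_bij_betw) auto
  also have "Pi_pmf B undefined (\<lambda>_. p) = map_pmf (\<lambda>f. restrict f B) (torus_iid p N)"
    unfolding torus_iid_def restrict_def by (rule Pi_pmf_subset[OF finite_torus \<open>B \<subseteq> torus N\<close>])
  also have "map_pmf (\<lambda>f. f \<circ> \<sigma>') \<dots> = map_pmf (\<lambda>xh. restrict (periodic_shift N u xh) (box n)) (torus_iid p N)"
    unfolding map_pmf_comp
  proof (intro map_pmf_cong refl ext)
    fix f v
    show "(restrict f B \<circ> \<sigma>') v = restrict (periodic_shift N u f) (box n) v"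
      using outside[of v] by (cases "v \<in> box n") (auto simp: \<sigma>'_def B_def \<sigma>_def periodic_shift_def)
  qed
  finally show ?thesis ..
qed

lemma measure_torus_window:
  fixes p :: "'a::finite pmf" and h :: "(('n::finite \<Rightarrow> int) \<Rightarrow> 'a) \<Rightarrow> bool"
  assumes "box_local n h" and "2 * n + 1 \<le> N" and "u \<in> torus N"
  shows "measure (torus_iid p N) {xh. h (periodic_shift N u xh)} = measure (iid p) {x. h x}"
proof -
  have "h (periodic_shift N u xh) = h (restrict (periodic_shift N u xh) (box n))" for xh
    using assms(1) by (simp add: box_local_def)
  then have "measure (torus_iid p N) {xh. h (periodic_shift N u xh)}
      = measure (map_pmf (\<lambda>xh. restrict (periodic_shift N u xh) (box n)) (torus_iid p N)) {z. h z}"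
    by (simp add: vimage_def)
  also have "\<dots> = measure (Pi_pmf (box n) undefined (\<lambda>_. p)) {z. h z}"
    by (simp add: map_pmf_restrict_periodic_shift[OF assms(2,3)])
  also have "\<dots> = measure (iid p) {x. h x}"
    by (rule measure_iid_eq_Pi_pmf_box[OF assms(1), symmetric])
  finally show ?thesis .
qed

lemma expectation_card_Jc:
  fixes p :: "'a::finite pmf" and G :: "(('n::finite \<Rightarrow> int) \<Rightarrow> 'a) \<Rightarrow> 'b option"
  assumes "box_local n G" and "2 * n + 1 \<le> N"
  shows "measure_pmf.expectation (torus_iid p N) (\<lambda>xh. real (card (Jc G N xh)))
       = real N ^ CARD('n) * measure (iid p) {x. G x = None}"
proof -
  define E where "E u = {xh. G (periodic_shift N u xh) = None}" for u :: "'n \<Rightarrow> int"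
  have "box_local n (\<lambda>x. G x = None)"
    using assms(1) unfolding box_local_def by metis
  have "real (card (Jc G N xh)) = (\<Sum>u\<in>torus N. indicator (E u) xh)" for xh
    by (simp add: Jc_def E_def periodic_shift_def indicator_def Int_def)
  then have "measure_pmf.expectation (torus_iid p N) (\<lambda>xh. real (card (Jc G N xh)))
      = (\<Sum>u\<in>torus N. measure (torus_iid p N) (E u))"
    by (simp add: Bochner_Integration.integral_sum measure_pmf.emeasure_finite less_top[symmetric])
  also have "\<dots> = (\<Sum>u::'n \<Rightarrow> int\<in>torus N. measure (iid p) {x. G x = None})"
    unfolding E_def using measure_torus_window[OF \<open>box_local n (\<lambda>x. G x = None)\<close> assms(2)]
    by (intro sum.cong) auto
  finally show ?thesis
    by (simp add: card_torus)
qed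

section \<open>The coding radius\<close>

definition codes_within ::
  "'a pmf \<Rightarrow> ((('n::finite \<Rightarrow> int) \<Rightarrow> 'a) \<Rightarrow> (('n \<Rightarrow> int) \<Rightarrow> 'b)) \<Rightarrow> nat \<Rightarrow> (('n \<Rightarrow> int) \<Rightarrow> 'a) \<Rightarrow> bool" where
  "codes_within p \<phi> n x \<longleftrightarrow> (AE a in iid p. (\<forall>v\<in>box n. a v = x v) \<longrightarrow> \<phi> a origin = \<phi> x origin)"

lemma coding_radius_altdef:
  "coding_radius p \<phi> x =
     (if \<exists>n. codes_within p \<phi> n x then enat (LEAST n. codes_within p \<phi> n x) else \<infinity>)"
  unfolding coding_radius_def codes_within_def Let_def ..

lemma codes_within_mono: "codes_within p \<phi> n x \<Longrightarrow> n \<le> m \<Longrightarrow> codes_within p \<phi> m x"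
  unfolding codes_within_def using box_mono[of n m] by (auto elim!: AE_mp)

lemma coding_radius_le_iff: "coding_radius p \<phi> x \<le> enat n \<longleftrightarrow> codes_within p \<phi> n x"
proof
  assume "coding_radius p \<phi> x \<le> enat n"
  then have "\<exists>n. codes_within p \<phi> n x" and "(LEAST n. codes_within p \<phi> n x) \<le> n"
    unfolding coding_radius_altdef by (auto split: if_splits)
  then show "codes_within p \<phi> n x"
    by (metis LeastI_ex codes_within_mono)
qed (auto simp: coding_radius_altdef intro: Least_le)

lemma trunc_code_eq_None_iff: "trunc_code p \<phi> n x = None \<longleftrightarrow> enat n < coding_radius p \<phi> x"
  by (auto simp: trunc_code_def not_less)

lemma sets_codes_within:
  fixes p :: "'a::finite pmf" and \<phi> :: "(('n::finite \<Rightarrow> int) \<Rightarrow> 'a) \<Rightarrow> (('n \<Rightarrow> int) \<Rightarrow> 'b::finite)"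
  assumes "\<phi> \<in> iid p \<rightarrow>\<^sub>M iid q"
  shows "{x. codes_within p \<phi> n x} \<in> sets (iid p)"
proof -
  define Q where "Q w b \<longleftrightarrow> (AE a in iid p. (\<forall>v\<in>box n. a v = w v) \<longrightarrow> \<phi> a origin = b)" for w b
  have "(\<lambda>x. \<phi> x origin) \<in> iid p \<rightarrow>\<^sub>M measure_pmf q"
    using assms unfolding iid_def by measurable
  then have origin_sets: "{x. \<phi> x origin = b} \<in> sets (iid p)" for b
    using measurable_sets[of _ "iid p" "measure_pmf q" "{b}"] by (simp add: vimage_def)
  have "{x. codes_within p \<phi> n x} = (\<Union>w\<in>box n \<rightarrow>\<^sub>E UNIV. \<Union>b\<in>{b. Q w b}.
      {x. \<forall>v\<in>box n. x v = w v} \<inter> {x. \<phi> x origin = b})"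
  proof safe
    fix x assume "codes_within p \<phi> n x"
    then show "x \<in> (\<Union>w\<in>box n \<rightarrow>\<^sub>E UNIV. \<Union>b\<in>{b. Q w b}. {x. \<forall>v\<in>box n. x v = w v} \<inter> {x. \<phi> x origin = b})"
      unfolding codes_within_def Q_def by (intro UN_I[of "restrict x (box n)"] UN_I[of "\<phi> x origin"]) auto
  qed (auto simp: codes_within_def Q_def)
  also have "\<dots> \<in> sets (iid p)"
    by (intro sets.finite_UN finite_PiE sets.Int iid_cylinder(1) origin_sets) auto
  finally show ?thesis .
qed

lemma measurable_coding_radius:
  fixes p :: "'a::finite pmf" and \<phi> :: "(('n::finite \<Rightarrow> int) \<Rightarrow> 'a) \<Rightarrow> (('n \<Rightarrow> int) \<Rightarrow> 'b::finite)"
  assumes "\<phi> \<in> iid p \<rightarrow>\<^sub>M iid q"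
  shows "coding_radius p \<phi> \<in> iid p \<rightarrow>\<^sub>M count_space UNIV"
proof -
  have le_sets: "{x. coding_radius p \<phi> x \<le> enat j} \<in> sets (iid p)" for j
    unfolding coding_radius_le_iff by (rule sets_codes_within[OF assms])
  have "coding_radius p \<phi> -` {e} \<in> sets (iid p)" for e
  proof (cases e)
    case (enat k)
    have "coding_radius p \<phi> -` {e}
        = {x. coding_radius p \<phi> x \<le> enat k} \<inter> (\<Inter>j\<in>{..<k}. - {x. coding_radius p \<phi> x \<le> enat j})"
    proof (intro set_eqI)
      fix x show "x \<in> coding_radius p \<phi> -` {e} \<longleftrightarrow>
          x \<in> {x. coding_radius p \<phi> x \<le> enat k} \<inter> (\<Inter>j\<in>{..<k}. - {x. coding_radius p \<phi> x \<le> enat j})"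
        using enat by (cases "coding_radius p \<phi> x") force+
    qed
    then show ?thesis
      using le_sets by (auto intro!: sets.Int sets.finite_INT sets.compl_sets simp del: Compl_eq)
  next
    case infinity
    have "coding_radius p \<phi> -` {e} = space (iid p) - (\<Union>j. {x. coding_radius p \<phi> x \<le> enat j})"
    proof (intro set_eqI)
      fix x show "x \<in> coding_radius p \<phi> -` {e} \<longleftrightarrow>
          x \<in> space (iid p) - (\<Union>j. {x. coding_radius p \<phi> x \<le> enat j})"
        using infinity by (cases "coding_radius p \<phi> x") auto
    qed
    moreover have "(\<Union>j. {x. coding_radius p \<phi> x \<le> enat j}) \<in> sets (iid p)"
      using le_sets by auto
    ultimately show ?thesis
      by (metis sets.compl_sets)
  qed
  then show ?thesis
    by (subst measurable_count_space_eq2_countable) auto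
qed

lemma measure_local_version_None:
  fixes p :: "'a::finite pmf" and \<phi> :: "(('n::finite \<Rightarrow> int) \<Rightarrow> 'a) \<Rightarrow> (('n \<Rightarrow> int) \<Rightarrow> 'b::finite)"
  assumes "\<phi> \<in> iid p \<rightarrow>\<^sub>M iid q" and "local_version p \<phi> n g"
  shows "measure (iid p) {x. g x = None} = measure (iid p) {x. enat n < coding_radius p \<phi> x}"
proof (rule measure_eq_AE)
  show "AE x in iid p. x \<in> {x. g x = None} \<longleftrightarrow> x \<in> {x. enat n < coding_radius p \<phi> x}"
    using assms(2) unfolding local_version_def
    by (auto elim!: AE_mp simp: trunc_code_eq_None_iff)
  have "box_local n (\<lambda>x. g x = None)"
    using assms(2) unfolding local_version_def box_local_def by metis
  then show "{x. g x = None} \<in> sets (iid p)"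
    by (rule measure_iid_box_local(1))
  show "{x. enat n < coding_radius p \<phi> x} \<in> sets (iid p)"
    using measurable_sets[OF measurable_coding_radius[OF assms(1)], of "{e. enat n < e}"]
    by (simp add: vimage_def)
qed

lemma expectation_card_Jc_local_version:
  fixes p :: "'a::finite pmf" and \<phi> :: "(('n::finite \<Rightarrow> int) \<Rightarrow> 'a) \<Rightarrow> (('n \<Rightarrow> int) \<Rightarrow> 'b::finite)"
  assumes "\<phi> \<in> iid p \<rightarrow>\<^sub>M iid q" and "local_version p \<phi> n g" and "2 * n + 1 \<le> N"
  shows "measure_pmf.expectation (torus_iid p N) (\<lambda>xh. real (card (Jc g N xh)))
       = real N ^ CARD('n) * measure (iid p) {x. enat n < coding_radius p \<phi> x}"
proof -
  have "box_local n g"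
    using assms(2) by (simp add: local_version_def box_local_def)
  then show ?thesis
    using expectation_card_Jc[of n g N p] assms(3) measure_local_version_None[OF assms(1,2)] by simp
qed

theorem corollary7:
  fixes p :: "'a::finite pmf" and q :: "'b::finite pmf"
    and \<phi> :: "(('n::finite \<Rightarrow> int) \<Rightarrow> 'a) \<Rightarrow> (('n \<Rightarrow> int) \<Rightarrow> 'b)"
    and g :: "nat \<Rightarrow> (('n \<Rightarrow> int) \<Rightarrow> 'a) \<Rightarrow> 'b option"
  assumes hom: "homomorphism p q \<phi>"
    and fin: "finitary p \<phi>"
    and moment: "(\<integral>\<^sup>+ x. (case coding_radius p \<phi> x of
                    enat r \<Rightarrow> ennreal (real r powr (real CARD('n) / 2)) | \<infinity> \<Rightarrow> \<infinity>) \<partial>iid p) < \<infinity>"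
    and versions: "\<And>n. local_version p \<phi> n (g n)"
  shows "\<exists>\<delta> :: nat \<Rightarrow> real. (\<forall>N. 0 < \<delta> N) \<and> decseq \<delta> \<and> \<delta> \<longlonglongrightarrow> 0 \<and>
           (\<lambda>N. measure_pmf.expectation (torus_iid p N)
                  (\<lambda>xh. real (card (Jc (g (nat \<lfloor>\<delta> N * real N\<rfloor>)) N xh))))
             \<in> o(\<lambda>N. real N powr (real CARD('n) / 2))"
proof -
  define a where "a = real CARD('n) / 2"
  define T where "T m = measure (iid p) {x. enat m < coding_radius p \<phi> x}" for m
  have meas: "\<phi> \<in> iid p \<rightarrow>\<^sub>M iid q"
    using hom by (simp add: homomorphism_def)
  obtain H where "\<forall>m. 0 \<le> H m" "decseq H" "H \<longlonglongrightarrow> 0" "\<forall>m. real m powr a * T m \<le> H m"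
    using tail_moment_bound[OF prob_space.finite_measure[OF prob_space_iid]
        measurable_coding_radius[OF meas] _ moment]
    by (auto simp: a_def T_def)
  then obtain \<delta> where \<delta>: "\<forall>N. 0 < \<delta> N" "decseq \<delta>" "\<delta> \<longlonglongrightarrow> 0"
    and lim: "(\<lambda>N. real N powr a * T (nat \<lfloor>\<delta> N * real N\<rfloor>)) \<longlonglongrightarrow> 0"
    using tail_rescaling[of a H T] by (auto simp: a_def T_def)
  define E where "E N = measure_pmf.expectation (torus_iid p N)
                  (\<lambda>xh. real (card (Jc (g (nat \<lfloor>\<delta> N * real N\<rfloor>)) N xh)))" for N
  have "\<forall>\<^sub>F N in sequentially. real N powr a * T (nat \<lfloor>\<delta> N * real N\<rfloor>) = E N / real N powr a"
    using eventually_window_fits[OF \<delta>(3)] eventually_ge_at_top[of 1]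
  proof eventually_elim
    case (elim N)
    have "real N ^ CARD('n) = real N powr a * real N powr a"
      using elim(2) by (simp add: a_def powr_realpow[symmetric] powr_add[symmetric])
    then have "E N = real N powr a * real N powr a * T (nat \<lfloor>\<delta> N * real N\<rfloor>)"
      unfolding E_def T_def by (simp add: expectation_card_Jc_local_version[OF meas versions elim(1)])
    then show ?case
      using elim(2) by simp
  qed
  with lim have "(\<lambda>N. E N / real N powr a) \<longlonglongrightarrow> 0"
    by (rule Lim_transform_eventually)
  then have "E \<in> o(\<lambda>N. real N powr a)"
    by (rule smalloI_tendsto) (auto intro: eventually_mono[OF eventually_ge_at_top[of 1]])
  with \<delta> show ?thesis
    unfolding E_def a_def by blast
qed

end
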